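(* For all positive integers $n$ and $k$, the outcome class of $G_{n,2nk}$ is $H$.
   Context: Domineering is a two-player game played on a rectangular grid of unit squares. The players alternate placing dominoes, each covering two adjacent unoccupied squares; the player Vertical must place dominoes vertically (covering two squares in the same column), and the player Horizontal must place them horizontally (covering two squares in the same row). A player with no legal move on her turn loses. $G_{m,n}$ denotes the empty board with vertical dimension $m$ (number of rows) and horizontal dimension $n$ (number of columns). Every position has one of four outcome classes under optimal play: $V$ (Vertical wins whoever moves first), $H$ (Horizontal wins whoever moves first), $1$ (the player who moves first wins), $2$ (the player who moves second wins). *)

theory Defs
  imports Main
begin

text \<open>Domineering. A position is the finite set of unoccupied squares; a square is
  a pair (row, column). Vertical covers (r,c),(r+1,c); Horizontal covers (r,c),(r,c+1).\<close>

datatype player = Vertical | Horizontal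

fun opponent :: "player \<Rightarrow> player" where
  "opponent Vertical = Horizontal"
| "opponent Horizontal = Vertical"

fun partner :: "player \<Rightarrow> nat \<times> nat \<Rightarrow> nat \<times> nat" where
  "partner Vertical (r, c) = (r + 1, c)"
| "partner Horizontal (r, c) = (r, c + 1)"

definition board :: "nat \<Rightarrow> nat \<Rightarrow> (nat \<times> nat) set" where
  "board m n = {(r, c). r < m \<and> c < n}"

text \<open>With f \<ge> card S the bound is never reached before moves run out.\<close>
fun wins_fuel :: "nat \<Rightarrow> player \<Rightarrow> (nat \<times> nat) set \<Rightarrow> bool" where
  "wins_fuel 0 P S = False"
| "wins_fuel (Suc f) P S =
     (\<exists>x\<in>S. partner P x \<in> S \<and> \<not> wins_fuel f (opponent P) (S - {x, partner P x}))"

definition wins_moving_first :: "player \<Rightarrow> (nat \<times> nat) set \<Rightarrow> bool" where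
  "wins_moving_first P S = wins_fuel (card S) P S"

datatype outcome = OutV | OutH | Out1 | Out2

definition outcome_class :: "(nat \<times> nat) set \<Rightarrow> outcome" where
  "outcome_class S =
    (if wins_moving_first Vertical S \<and> \<not> wins_moving_first Horizontal S then OutV
     else if wins_moving_first Horizontal S \<and> \<not> wins_moving_first Vertical S then OutH
     else if wins_moving_first Vertical S \<and> wins_moving_first Horizontal S then Out1
     else Out2)"

end

theory Submission
  imports Defs
begin

text \<open>Horizontal wins by a mirror strategy. Cut the board into \<open>n \<times> 2n\<close> blocks and let \<open>\<sigma>\<close>
  rotate the left \<open>n \<times> n\<close> square of each block by a quarter turn onto the right one, and back.
  Then \<open>\<sigma>\<close> is a fixed-point-free involution of the board taking every vertical domino to a
  horizontal one. In a \<open>\<sigma>\<close>-symmetric position Horizontal answers each move of Vertical by its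
  image, which is still free and restores the symmetry, so Vertical to move loses. Moving first,
  Horizontal plays the \<open>\<sigma>\<close>-invariant domino across the middle of the first row of a block and
  hands Vertical a symmetric position.\<close>

lemma opponent_opponent [simp]: "opponent (opponent P) = P"
  by (cases P) simp_all

lemma partner_neq [simp]: "partner P x \<noteq> x" "x \<noteq> partner P x"
  by (cases P; cases x; simp)+

lemma domino_neq_opponent_domino: "{x, partner P x} \<noteq> {y, partner (opponent P) y}"
  by (cases P; cases x; cases y) (auto simp: doubleton_eq_iff)

definition mirror_involution ::
    "player \<Rightarrow> (nat \<times> nat \<Rightarrow> nat \<times> nat) \<Rightarrow> (nat \<times> nat) set \<Rightarrow> bool" where
  "mirror_involution P \<sigma> B \<longleftrightarrow>
     (\<forall>x\<in>B. \<sigma> x \<in> B \<and> \<sigma> (\<sigma> x) = x \<and> \<sigma> x \<noteq> x) \<and>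
     (\<forall>x\<in>B. partner P x \<in> B \<longrightarrow> (\<exists>y. {\<sigma> x, \<sigma> (partner P x)} = {y, partner (opponent P) y}))"

lemma mirror_involutionD:
  assumes "mirror_involution P \<sigma> B" and "x \<in> B"
  shows "\<sigma> (\<sigma> x) = x" and "\<sigma> x \<noteq> x"
  using assms by (auto simp: mirror_involution_def)

lemma mirror_involution_image_subset:
  "mirror_involution P \<sigma> B \<Longrightarrow> \<sigma> ` B \<subseteq> B"
  by (auto simp: mirror_involution_def)

lemma mirror_involution_distinct:
  assumes mirror: "mirror_involution P \<sigma> B" and xB: "x \<in> B" and pxB: "partner P x \<in> B"
  shows "distinct [x, partner P x, \<sigma> x, \<sigma> (partner P x)]"
proof -
  obtain y where y: "{\<sigma> x, \<sigma> (partner P x)} = {y, partner (opponent P) y}"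
    using mirror xB pxB by (auto simp: mirror_involution_def)
  note inv = mirror_involutionD[OF mirror]
  \<comment> \<open>If the image met the domino, it would be the domino itself, which is not a domino of
      the opponent.\<close>
  have "\<sigma> x \<noteq> partner P x" "\<sigma> (partner P x) \<noteq> x"
    using y domino_neq_opponent_domino[of x P] inv(1)[OF xB] inv(1)[OF pxB]
    by (metis insert_commute)+
  moreover have "\<sigma> x \<noteq> \<sigma> (partner P x)"
    using inv(1)[OF xB] inv(1)[OF pxB] by (metis partner_neq(2))
  ultimately show ?thesis using inv(2)[OF xB] inv(2)[OF pxB] by auto
qed

lemma involution_invariant_Diff:
  assumes "\<forall>x\<in>B. \<sigma> (\<sigma> x) = x" and "S \<subseteq> B" and "\<sigma> ` S \<subseteq> S"
    and "D \<subseteq> B" and "\<sigma> ` D \<subseteq> D"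
  shows "\<sigma> ` (S - D) \<subseteq> S - D"
proof
  fix z assume "z \<in> \<sigma> ` (S - D)"
  then obtain x where x: "x \<in> S" "x \<notin> D" and z: "z = \<sigma> x" by blast
  have "z \<notin> D"
  proof
    assume "z \<in> D"
    then have "\<sigma> z \<in> D" using assms(5) by blast
    then show False using x z assms(1,2) by auto
  qed
  then show "z \<in> S - D" using x z assms(3) by blast
qed

lemma mirror_player_loses:
  assumes mirror: "mirror_involution P \<sigma> B" and "finite B"
    and "S \<subseteq> B" and "\<sigma> ` S \<subseteq> S" and "card S \<le> f"
  shows "\<not> wins_fuel f P S"
  using assms(3-5)
proof (induction f arbitrary: S rule: less_induct)
  case (less f)
  note inv = mirror_involutionD[OF mirror]
  have involutive: "\<forall>x\<in>B. \<sigma> (\<sigma> x) = x" using inv(1) by blast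
  show ?case
  proof (cases f)
    case (Suc f')
    have "wins_fuel f' (opponent P) (S - {x, partner P x})"
      if xS: "x \<in> S" and pxS: "partner P x \<in> S" for x
    proof -
      define px where "px = partner P x"
      define D where "D = {x, px, \<sigma> x, \<sigma> px}"
      have xB: "x \<in> B" and pxB: "px \<in> B" using xS pxS less.prems(1) px_def by auto
      obtain y where y: "{\<sigma> x, \<sigma> px} = {y, partner (opponent P) y}"
        using mirror xB pxB px_def by (auto simp: mirror_involution_def)
      have distinct: "distinct [x, px, \<sigma> x, \<sigma> px]"
        using mirror_involution_distinct[OF mirror xB] pxB px_def by simp
      have DS: "D \<subseteq> S" using xS pxS less.prems(2) px_def D_def by auto
      have DB: "D \<subseteq> B" using DS less.prems(1) by blast
      have "\<sigma> ` D \<subseteq> D" using inv(1)[OF xB] inv(1)[OF pxB] unfolding D_def by auto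
      then have invariant: "\<sigma> ` (S - D) \<subseteq> S - D"
        by (rule involution_invariant_Diff[OF involutive less.prems(1,2) DB])
      have "card D = 4" using distinct_card[OF distinct] D_def by simp
      moreover have "finite S" using less.prems(1) \<open>finite B\<close> by (rule finite_subset)
      ultimately have card: "card (S - D) = card S - 4" and "4 \<le> card S"
        using card_Diff_subset[OF _ DS] card_mono[OF _ DS] finite_subset[OF DS] by auto
      then obtain g where g: "f' = Suc g"
        using Suc less.prems(3) by (cases f') auto
      have "\<not> wins_fuel g P (S - D)"
        using less.IH[of g "S - D"] less.prems(1,3) Suc g invariant card by force
      moreover have "S - {x, px} - {y, partner (opponent P) y} = S - D"
        using y D_def by auto
      ultimately have "\<not> wins_fuel g (opponent (opponent P)) (S - {x, px} - {y, partner (opponent P) y})"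
        by simp
      moreover have "y \<in> S - {x, px}" "partner (opponent P) y \<in> S - {x, px}"
        using y distinct DS D_def by (auto simp: doubleton_eq_iff)
      ultimately show ?thesis
        unfolding g px_def[symmetric] wins_fuel.simps by blast
    qed
    then show ?thesis using Suc by auto
  qed simp
qed

lemma mirror_first_move_wins:
  assumes mirror: "mirror_involution (opponent P) \<sigma> B" and "finite B"
    and "S \<subseteq> B" and "\<sigma> ` S \<subseteq> S" and yS: "y \<in> S" and \<sigma>y: "\<sigma> y = partner P y"
    and "card S \<le> Suc f"
  shows "wins_fuel (Suc f) P S"
proof -
  note inv = mirror_involutionD[OF mirror]
  have involutive: "\<forall>x\<in>B. \<sigma> (\<sigma> x) = x" using inv(1) by blast
  have pyS: "partner P y \<in> S" using yS \<sigma>y \<open>\<sigma> ` S \<subseteq> S\<close> by (metis image_subset_iff)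
  have yB: "y \<in> B" and DB: "{y, partner P y} \<subseteq> B" using yS pyS \<open>S \<subseteq> B\<close> by auto
  have "\<sigma> ` {y, partner P y} \<subseteq> {y, partner P y}" using inv(1)[OF yB] \<sigma>y by auto
  then have "\<sigma> ` (S - {y, partner P y}) \<subseteq> S - {y, partner P y}"
    by (rule involution_invariant_Diff[OF involutive \<open>S \<subseteq> B\<close> \<open>\<sigma> ` S \<subseteq> S\<close> DB])
  moreover have "card (S - {y, partner P y}) \<le> f"
    using \<open>card S \<le> Suc f\<close> yS pyS by (simp add: card_Diff_subset)
  moreover have "S - {y, partner P y} \<subseteq> B" using \<open>S \<subseteq> B\<close> by blast
  ultimately have "\<not> wins_fuel f (opponent P) (S - {y, partner P y})"
    by (intro mirror_player_loses[OF mirror \<open>finite B\<close>])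
  then show ?thesis using yS pyS by auto
qed

lemma outcome_class_OutH_by_mirror:
  assumes mirror: "mirror_involution Vertical \<sigma> B" and "finite B"
    and "y \<in> B" and "\<sigma> y = partner Horizontal y"
  shows "outcome_class B = OutH"
proof -
  have "\<not> wins_moving_first Vertical B"
    using mirror_player_loses[OF mirror \<open>finite B\<close> order_refl] mirror_involution_image_subset[OF mirror]
    by (simp add: wins_moving_first_def)
  moreover obtain m where m: "card B = Suc m"
    using \<open>y \<in> B\<close> \<open>finite B\<close> by (metis card_0_eq empty_iff not0_implies_Suc)
  then have "wins_moving_first Horizontal B"
    using mirror_first_move_wins[of Horizontal \<sigma> B B y m] assms mirror_involution_image_subset[OF mirror]
    by (simp add: wins_moving_first_def)
  ultimately show ?thesis by (simp add: outcome_class_def)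
qed

lemma finite_board: "finite (board m n)"
proof -
  have "board m n = {..<m} \<times> {..<n}" by (auto simp: board_def)
  then show ?thesis by simp
qed

definition block_rotation :: "nat \<Rightarrow> nat \<times> nat \<Rightarrow> nat \<times> nat" where
  "block_rotation n = (\<lambda>(r, c). let j = c div (2 * n); b = c mod (2 * n) in
     if b < n then (n - 1 - b, 2 * n * j + (n + r)) else (b - n, 2 * n * j + (n - 1 - r)))"

lemma block_rotation_left:
  "b < n \<Longrightarrow> block_rotation n (r, 2 * n * j + b) = (n - 1 - b, 2 * n * j + (n + r))"
  by (simp add: block_rotation_def)

lemma block_rotation_right:
  "b < n \<Longrightarrow> block_rotation n (r, 2 * n * j + (n + b)) = (b, 2 * n * j + (n - 1 - r))"
  by (simp add: block_rotation_def)

lemma block_cell_in_board: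
  assumes "r < n" "j < k" "b < 2 * n"
  shows "(r, 2 * n * j + b) \<in> board n (2 * n * k)"
proof -
  have "2 * n * j + b < 2 * n * Suc j" using assms(3) by simp
  also have "\<dots> \<le> 2 * n * k" using assms(2) by (intro mult_le_mono2) simp
  finally show ?thesis using assms(1) by (simp add: board_def)
qed

lemma board_block_cases:
  assumes "(r, c) \<in> board n (2 * n * k)"
  obtains j b where "r < n" "j < k" "b < n" "c = 2 * n * j + b"
    | j b where "r < n" "j < k" "b < n" "c = 2 * n * j + (n + b)"
proof -
  define j b where "j = c div (2 * n)" and "b = c mod (2 * n)"
  have r: "r < n" and c: "c = 2 * n * j + b" and b: "b < 2 * n"
    using assms by (auto simp: board_def j_def b_def)
  have "c < 2 * n * k" using assms by (simp add: board_def)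
  then have "j < k" unfolding j_def by (metis less_mult_imp_div_less mult.commute)
  show ?thesis
  proof (cases "b < n")
    case False
    then show ?thesis using that(2)[of j "b - n"] r c b \<open>j < k\<close> by simp
  qed (use that(1) r c \<open>j < k\<close> in blast)
qed

lemma block_rotation_involution:
  assumes "(r, c) \<in> board n (2 * n * k)"
  shows "block_rotation n (r, c) \<in> board n (2 * n * k) \<and>
    block_rotation n (block_rotation n (r, c)) = (r, c) \<and> block_rotation n (r, c) \<noteq> (r, c)"
  using assms
proof (cases rule: board_block_cases)
  case (1 j b)
  then show ?thesis
    using block_rotation_right[of r n "n - 1 - b" j] block_cell_in_board[of "n - 1 - b" n j k "n + r"]
    by (simp add: block_rotation_left)
next
  case (2 j b)
  then show ?thesis
    using block_rotation_left[of "n - 1 - r" n b j] block_cell_in_board[of b n j k "n - 1 - r"]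
    by (auto simp: block_rotation_right)
qed

lemma block_rotation_vertical_domino:
  assumes "(r, c) \<in> board n (2 * n * k)" and "partner Vertical (r, c) \<in> board n (2 * n * k)"
  shows "\<exists>y. {block_rotation n (r, c), block_rotation n (partner Vertical (r, c))} =
    {y, partner Horizontal y}"
  using assms(1)
proof (cases rule: board_block_cases)
  case (1 j b)
  then have "{block_rotation n (r, c), block_rotation n (partner Vertical (r, c))} =
      {(n - 1 - b, 2 * n * j + (n + r)), partner Horizontal (n - 1 - b, 2 * n * j + (n + r))}"
    by (simp add: block_rotation_left)
  then show ?thesis by blast
next
  case (2 j b)
  have "r + 1 < n" using assms(2) by (simp add: board_def)
  then have "block_rotation n (r, c) = partner Horizontal (b, 2 * n * j + (n - 1 - (r + 1)))"
    using 2 by (simp add: block_rotation_right)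
  moreover have "block_rotation n (partner Vertical (r, c)) = (b, 2 * n * j + (n - 1 - (r + 1)))"
    using 2 by (simp add: block_rotation_right)
  ultimately show ?thesis by (metis insert_commute)
qed

lemma mirror_involution_block_rotation:
  "mirror_involution Vertical (block_rotation n) (board n (2 * n * k))"
proof -
  have "block_rotation n x \<in> board n (2 * n * k) \<and>
      block_rotation n (block_rotation n x) = x \<and> block_rotation n x \<noteq> x"
    if "x \<in> board n (2 * n * k)" for x
    using that by (cases x) (simp only: block_rotation_involution simp_thms)
  moreover have "\<exists>y. {block_rotation n x, block_rotation n (partner Vertical x)} =
      {y, partner Horizontal y}"
    if "x \<in> board n (2 * n * k)" "partner Vertical x \<in> board n (2 * n * k)" for x
    using that by (cases x) (simp only: block_rotation_vertical_domino)
  ultimately show ?thesis unfolding mirror_involution_def opponent.simps by blast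
qed

theorem proposition3p1:
  fixes n k :: nat
  assumes "n > 0" and "k > 0"
  shows "outcome_class (board n (2 * n * k)) = OutH"
proof -
  have "(0, n - 1) \<in> board n (2 * n * k)"
    using block_cell_in_board[of 0 n 0 k "n - 1"] assms by simp
  moreover have "block_rotation n (0, n - 1) = partner Horizontal (0, n - 1)"
    using block_rotation_left[of "n - 1" n 0 0] assms by simp
  ultimately show ?thesis
    using outcome_class_OutH_by_mirror[OF mirror_involution_block_rotation finite_board] by blast
qed

end
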